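(* Let $f$ be a non-increasing real function on the battery energy states. If $0\le u_1\le u_2\le\epsilon_0$, then $$\sum_{\epsilon_1}p(\epsilon_1|\epsilon_0,u_1)f(\epsilon_1)\le\sum_{\epsilon_2}p(\epsilon_2|\epsilon_0,u_2)f(\epsilon_2),$$ where $p(\epsilon'|\epsilon_0,u)=\Pr\{Q(\epsilon_0-u+E_H)=\epsilon'\}$ is the probability that the battery is in energy state $\epsilon'$ in the next block given current energy $\epsilon_0$ and harvested energy $u$ consumed in the current block.
   Context: Parameters $B_m>0$ and a positive integer $M$. Battery energy states are $\{(2m-1)B_m/(2M): m=1,\dots,M\}$, and the quantizer is $Q(\varepsilon)=\big(2\min\{\lfloor M\min\{\varepsilon,B_m\}/B_m\rfloor+1,M\}-1\big)B_m/(2M)$ for $\varepsilon\ge0$. $E_H$ is a random variable with density $f_{E_H}$ on $[0,E_m]$, $E_m>0$. $\epsilon_0$ is a battery energy state. *)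

theory Defs
  imports "HOL-Probability.Probability"
begin

definition battery_states :: "real \<Rightarrow> nat \<Rightarrow> real set" where
  "battery_states Bm M = (\<lambda>m::nat. (2 * real m - 1) * Bm / (2 * real M)) ` {1..M}"

definition quant :: "real \<Rightarrow> nat \<Rightarrow> real \<Rightarrow> real" where
  "quant Bm M \<epsilon> =
     (2 * real_of_int (min (\<lfloor>real M * min \<epsilon> Bm / Bm\<rfloor> + 1) (int M)) - 1) * Bm / (2 * real M)"

definition trans_prob ::
  "'w measure \<Rightarrow> ('w \<Rightarrow> real) \<Rightarrow> real \<Rightarrow> nat \<Rightarrow> real \<Rightarrow> real \<Rightarrow> real \<Rightarrow> real" where
  "trans_prob P EH Bm M e' e0 u = measure P {\<omega> \<in> space P. quant Bm M (e0 - u + EH \<omega>) = e'}"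

end

theory Submission
  imports Defs
begin

text \<open>Both sums are expectations of \<open>f\<close> evaluated at the next battery state
  \<open>Q (\<epsilon>0 - u + E\<^sub>H)\<close>. Since \<open>E\<^sub>H \<ge> 0\<close> almost surely, the quantizer only sees nonnegative
  arguments, where it is monotone and takes values among the battery states. Increasing \<open>u\<close>
  lowers the next state pointwise, so the non-increasing \<open>f\<close> increases pointwise, and
  monotonicity of the integral finishes the proof.\<close>

lemma borel_measurable_quant [measurable]: "quant Bm M \<in> borel_measurable borel"
  unfolding quant_def by measurable

lemma quant_mono:
  assumes "Bm > 0" and "x \<le> y"
  shows "quant Bm M x \<le> quant Bm M y"
proof -
  have "real M * min x Bm / Bm \<le> real M * min y Bm / Bm"
    using assms by (intro divide_right_mono mult_left_mono) auto
  then have "\<lfloor>real M * min x Bm / Bm\<rfloor> \<le> \<lfloor>real M * min y Bm / Bm\<rfloor>"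
    by (rule floor_mono)
  then show ?thesis
    unfolding quant_def using assms by (intro divide_right_mono mult_right_mono) auto
qed

lemma quant_in_battery_states:
  assumes "Bm > 0" and "M > 0" and "0 \<le> x"
  shows "quant Bm M x \<in> battery_states Bm M"
proof -
  define k where "k = min (\<lfloor>real M * min x Bm / Bm\<rfloor> + 1) (int M)"
  have "0 \<le> real M * min x Bm / Bm" using assms by auto
  then have "1 \<le> k" and "k \<le> int M" unfolding k_def using assms by auto
  then have "nat k \<in> {1..M}" by auto
  moreover have "quant Bm M x = (2 * real (nat k) - 1) * Bm / (2 * real M)"
    unfolding quant_def k_def[symmetric] using \<open>1 \<le> k\<close> by simp
  ultimately show ?thesis unfolding battery_states_def by blast
qed

lemma has_bochner_integral_finite_valued:
  fixes X :: "'w \<Rightarrow> 'a :: t1_space" and f :: "'a \<Rightarrow> real"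
  assumes "finite_measure P" and "X \<in> borel_measurable P" and "finite S"
  shows "has_bochner_integral P (\<lambda>\<omega>. if X \<omega> \<in> S then f (X \<omega>) else 0)
           (\<Sum>s\<in>S. measure P {\<omega> \<in> space P. X \<omega> = s} * f s)"
proof -
  interpret finite_measure P by (rule assms(1))
  have sets: "{\<omega> \<in> space P. X \<omega> = s} \<in> sets P" for s
    using assms(2) by measurable
  have pointwise: "(if X \<omega> \<in> S then f (X \<omega>) else 0)
      = (\<Sum>s\<in>S. indicator {\<omega> \<in> space P. X \<omega> = s} \<omega> * f s)" if "\<omega> \<in> space P" for \<omega>
    using that assms(3) by (simp add: indicator_def if_distrib sum.delta cong: if_cong)
  have "has_bochner_integral P (\<lambda>\<omega>. \<Sum>s\<in>S. indicator {\<omega> \<in> space P. X \<omega> = s} \<omega> * f s)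
          (\<Sum>s\<in>S. measure P {\<omega> \<in> space P. X \<omega> = s} * f s)"
    using sets by (intro has_bochner_integral_sum has_bochner_integral_mult_left
        has_bochner_integral_real_indicator) (auto simp: less_top[symmetric])
  then show ?thesis
    by (rule has_bochner_integral_cong[THEN iffD1, rotated 3]) (simp_all add: pointwise)
qed

lemma AE_nonneg_if_density_vanishes_on_negatives:
  fixes X :: "'w \<Rightarrow> real"
  assumes "distributed P lborel X (\<lambda>x. ennreal (g x))" and "\<And>x. x < 0 \<Longrightarrow> g x = 0"
  shows "AE \<omega> in P. 0 \<le> X \<omega>"
proof (rule AE_I'[where N="X -` {..<0} \<inter> space P"])
  have X: "X \<in> measurable P lborel"
    and distr: "distr P lborel X = density lborel (\<lambda>x. ennreal (g x))"
    using assms(1) by (auto simp: distributed_def)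
  have "emeasure P (X -` {..<0} \<inter> space P) = emeasure (distr P lborel X) {..<0}"
    using X by (simp add: emeasure_distr)
  also have "\<dots> = (\<integral>\<^sup>+ x. ennreal (g x) * indicator {..<0} x \<partial>lborel)"
    unfolding distr using distributed_borel_measurable[OF assms(1)]
    by (subst emeasure_density) auto
  also have "\<dots> = (\<integral>\<^sup>+ (x::real). 0 \<partial>lborel)"
    using assms(2) by (intro nn_integral_cong) (auto simp: indicator_def)
  finally show "X -` {..<0} \<inter> space P \<in> null_sets P"
    using X by (auto simp: null_sets_def)
qed auto

theorem lemma2:
  fixes P :: "'w measure" and EH :: "'w \<Rightarrow> real" and fEH :: "real \<Rightarrow> real"
    and Bm Em \<epsilon>0 u1 u2 :: real and M :: nat and f :: "real \<Rightarrow> real"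
  assumes "Bm > 0" and "M > 0" and "Em > 0"
    and "prob_space P"
    and "distributed P lborel EH (\<lambda>x. ennreal (fEH x))"
    and "\<And>x. fEH x \<ge> 0"
    and "\<And>x. x \<notin> {0..Em} \<Longrightarrow> fEH x = 0"
    and "\<epsilon>0 \<in> battery_states Bm M"
    and "\<And>a b. a \<in> battery_states Bm M \<Longrightarrow> b \<in> battery_states Bm M \<Longrightarrow> a \<le> b \<Longrightarrow> f b \<le> f a"
    and "0 \<le> u1" and "u1 \<le> u2" and "u2 \<le> \<epsilon>0"
  shows "(\<Sum>\<epsilon>1\<in>battery_states Bm M. trans_prob P EH Bm M \<epsilon>1 \<epsilon>0 u1 * f \<epsilon>1)
       \<le> (\<Sum>\<epsilon>2\<in>battery_states Bm M. trans_prob P EH Bm M \<epsilon>2 \<epsilon>0 u2 * f \<epsilon>2)"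
proof -
  interpret prob_space P by (rule assms(4))
  let ?S = "battery_states Bm M"
  let ?next = "\<lambda>u \<omega>. quant Bm M (\<epsilon>0 - u + EH \<omega>)"
  let ?g = "\<lambda>u \<omega>. if ?next u \<omega> \<in> ?S then f (?next u \<omega>) else 0"
  have "EH \<in> borel_measurable P"
    using assms(5) by (auto simp: distributed_def)
  moreover have "finite ?S" unfolding battery_states_def by simp
  ultimately have expectation:
    "has_bochner_integral P (?g u) (\<Sum>s\<in>?S. trans_prob P EH Bm M s \<epsilon>0 u * f s)" for u
    unfolding trans_prob_def
    by (intro has_bochner_integral_finite_valued finite_measure_axioms) auto
  have "AE \<omega> in P. 0 \<le> EH \<omega>"
    using assms(5,7) by (rule AE_nonneg_if_density_vanishes_on_negatives) auto
  then have "AE \<omega> in P. ?g u1 \<omega> \<le> ?g u2 \<omega>"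
  proof eventually_elim
    case (elim \<omega>)
    have "0 \<le> \<epsilon>0 - u2 + EH \<omega>" and "0 \<le> \<epsilon>0 - u1 + EH \<omega>"
      using elim assms(11,12) by linarith+
    then have next1: "?next u1 \<omega> \<in> ?S" and next2: "?next u2 \<omega> \<in> ?S"
      using assms(1,2) by (auto intro: quant_in_battery_states)
    moreover have "?next u2 \<omega> \<le> ?next u1 \<omega>"
      using assms(1,11) by (intro quant_mono) auto
    ultimately show ?case using assms(9)[OF next2 next1] by simp
  qed
  then have "integral\<^sup>L P (?g u1) \<le> integral\<^sup>L P (?g u2)"
    by (rule integral_mono_AE[OF integrable.intros integrable.intros, OF expectation expectation])
  then show ?thesis
    by (simp only: expectation[THEN has_bochner_integral_integral_eq])
qed

end
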